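(* Let $\Phi$ be a homogeneous Poisson point process of intensity $1$ in $\mathbb{R}^2$ with an additional point added at the origin $o$, and let $\Psi$ be an independent homogeneous Poisson point process of intensity $\lambda>0$ in $\mathbb{R}^2$. Let $\vec G_{\lambda,\infty}$ be the directed graph on $\Phi$ containing the directed edge $\overrightarrow{xy}$ ($x\ne y$) iff the closed disk of radius $\|x-y\|$ centered at $x$ contains no point of $\Psi$. Then the out-degree $N^{\mathrm{out}}$ of $o$ in $\vec G_{\lambda,\infty}$ is geometrically distributed with mean $1/\lambda$; precisely, $$\mathbb{P}[N^{\mathrm{out}}=n]=\frac{\lambda}{1+\lambda}\left(\frac{1}{1+\lambda}\right)^n,\qquad n=0,1,2,\dots$$ *)

theory Defs
  imports "HOL-Probability.Probability"
begin

definition pcount :: "(real^2) set \<Rightarrow> (real^2) set \<Rightarrow> nat" where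
  "pcount P A = card (P \<inter> A)"

text \<open>Two independent homogeneous Poisson point processes in the plane, given as random
  locally finite point sets on a probability space M, with intensities a and b:
  counts in bounded Borel sets are Poisson distributed with mean intensity times area,
  and the counts of both processes on disjoint bounded Borel sets are jointly independent
  (which also expresses the independence of the two processes).\<close>
definition indep_poisson_pps ::
  "'w measure \<Rightarrow> ('w \<Rightarrow> (real^2) set) \<Rightarrow> real \<Rightarrow> ('w \<Rightarrow> (real^2) set) \<Rightarrow> real \<Rightarrow> bool" where
  "indep_poisson_pps M Phi a Psi b \<longleftrightarrow>
     prob_space M \<and>
     (\<forall>\<omega>\<in>space M. \<forall>A. bounded A \<longrightarrow> finite (Phi \<omega> \<inter> A) \<and> finite (Psi \<omega> \<inter> A)) \<and>
     (\<forall>A\<in>sets lborel. bounded A \<longrightarrow>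
        (\<lambda>\<omega>. pcount (Phi \<omega>) A) \<in> measurable M (count_space UNIV) \<and>
        (\<lambda>\<omega>. pcount (Psi \<omega>) A) \<in> measurable M (count_space UNIV) \<and>
        (\<forall>k. measure M {\<omega>\<in>space M. pcount (Phi \<omega>) A = k}
               = (a * measure lborel A) ^ k / fact k * exp (- (a * measure lborel A))) \<and>
        (\<forall>k. measure M {\<omega>\<in>space M. pcount (Psi \<omega>) A = k}
               = (b * measure lborel A) ^ k / fact k * exp (- (b * measure lborel A)))) \<and>
     (\<forall>(I::nat set) (A::nat \<Rightarrow> (real^2) set) (B::nat \<Rightarrow> (real^2) set).
        finite I \<longrightarrow>
        (\<forall>i\<in>I. A i \<in> sets lborel \<and> bounded (A i) \<and> B i \<in> sets lborel \<and> bounded (B i)) \<longrightarrow>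
        disjoint_family_on A I \<longrightarrow> disjoint_family_on B I \<longrightarrow>
        prob_space.indep_vars M (\<lambda>_. count_space UNIV)
          (\<lambda>j \<omega>. case j of Inl i \<Rightarrow> pcount (Phi \<omega>) (A i) | Inr i \<Rightarrow> pcount (Psi \<omega>) (B i))
          (Inl ` I \<union> Inr ` I))"

definition out_edge :: "(real^2) set \<Rightarrow> real^2 \<Rightarrow> real^2 \<Rightarrow> bool" where
  "out_edge Psi x y \<longleftrightarrow> x \<noteq> y \<and> Psi \<inter> cball x (dist x y) = {}"

definition out_degree_origin :: "(real^2) set \<Rightarrow> (real^2) set \<Rightarrow> nat" where
  "out_degree_origin Phi Psi = card {y \<in> insert 0 Phi. out_edge Psi 0 y}"

end

theory Submission
  imports Defs "HOL-Real_Asymp.Real_Asymp"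
begin

text \<open>Let \<open>R\<close> be the distance from the origin to \<open>Psi\<close>. Then \<open>\<pi>R\<^sup>2\<close> is exponential with rate
  \<open>\<lambda>\<close>, and given \<open>R\<close> the out-neighbours of the origin are exactly the points of \<open>Phi\<close> in the
  punctured disk of radius \<open>R\<close>, whose number is Poisson with mean \<open>\<pi>R\<^sup>2\<close>. Hence the out-degree
  \<open>N\<close> satisfies \<open>P[N > n] = \<integral>\<^sub>0\<^sup>\<infinity> \<lambda> exp(-\<lambda>t) P[Poisson(t) > n] dt = (1 + \<lambda>)^-(n+1)\<close>.
  To avoid conditioning on \<open>R\<close>, the plane is cut into annuli of area \<open>h\<close>: the event \<open>N > n\<close>
  contains the disjoint events ``the nearest point of \<open>Psi\<close> is in the \<open>k\<close>-th annulus and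
  \<open>Phi\<close> has more than \<open>n\<close> points inside its inner circle'', and up to the null event
  \<open>Psi = {}\<close> it is covered by the same events with the outer circle instead. By independence
  their probabilities are lower and upper Riemann--Stieltjes sums of the integral, which differ by
  at most \<open>h\<close>.\<close>

definition poisson_lower_tail :: "nat \<Rightarrow> real \<Rightarrow> real" where
  "poisson_lower_tail n t = exp (-t) * (\<Sum>m<n. t^m / fact m)"

lemma poisson_lower_tail_Suc_0: "poisson_lower_tail (Suc 0) t = exp (-t)"
  by (simp add: poisson_lower_tail_def)

lemma poisson_lower_tail_Suc_at_0: "poisson_lower_tail (Suc n) 0 = 1"
  by (induction n) (auto simp: poisson_lower_tail_def)

lemma poisson_lower_tail_nonneg: "0 \<le> t \<Longrightarrow> 0 \<le> poisson_lower_tail n t"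
  unfolding poisson_lower_tail_def by (simp add: sum_nonneg)

lemma poisson_lower_tail_le_1:
  assumes "0 \<le> t" shows "poisson_lower_tail n t \<le> 1"
proof -
  have "(\<Sum>m<n. t^m / fact m) \<le> exp t"
    using assms summable_exp_generic[of t]
    by (auto simp: exp_def divide_inverse ac_simps intro!: sum_le_suminf)
  then show ?thesis by (simp add: poisson_lower_tail_def exp_minus field_simps)
qed

lemma poisson_lower_tail_has_real_derivative:
  "(poisson_lower_tail (Suc n) has_real_derivative - exp (-t) * t^n / fact n) (at t)"
proof (induction n)
  case 0
  then show ?case unfolding poisson_lower_tail_def by (auto intro!: derivative_eq_intros)
next
  case (Suc n)
  have "poisson_lower_tail (Suc (Suc n))
      = (\<lambda>t. poisson_lower_tail (Suc n) t + exp (-t) * (t^Suc n / fact (Suc n)))"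
    by (auto simp: poisson_lower_tail_def algebra_simps fun_eq_iff)
  moreover have "((\<lambda>t. poisson_lower_tail (Suc n) t + exp (-t) * (t^Suc n / fact (Suc n)))
      has_real_derivative - exp (-t) * t^n / fact n
        + (- exp (-t) * (t^Suc n / fact (Suc n)) + exp (-t) * (real (Suc n) * t^n / fact (Suc n)))) (at t)"
    by (intro DERIV_add[OF Suc.IH] derivative_eq_intros) auto
  moreover have "- exp (-t) * t^n / fact n
        + (- exp (-t) * (t^Suc n / fact (Suc n)) + exp (-t) * (real (Suc n) * t^n / fact (Suc n)))
      = - exp (-t) * t^Suc n / fact (Suc n)"
  proof -
    have "real (Suc n) * t^n / fact (Suc n) = t^n / fact n"
      by (simp add: fact_Suc divide_simps del: of_nat_Suc)
    then show ?thesis by (simp add: algebra_simps)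
  qed
  ultimately show ?case by simp
qed

lemma poisson_lower_tail_antimono:
  "0 \<le> x \<Longrightarrow> x \<le> y \<Longrightarrow> poisson_lower_tail (Suc n) y \<le> poisson_lower_tail (Suc n) x"
  by (rule DERIV_nonpos_imp_nonincreasing)
     (use poisson_lower_tail_has_real_derivative in \<open>auto intro!: exI divide_nonneg_nonneg\<close>)

lemma poisson_lower_tail_lipschitz:
  assumes "0 \<le> x" "x \<le> y"
  shows "poisson_lower_tail (Suc n) x - poisson_lower_tail (Suc n) y \<le> y - x"
proof -
  have "poisson_lower_tail (Suc n) x + x \<le> poisson_lower_tail (Suc n) y + y"
  proof (rule DERIV_nonneg_imp_nondecreasing[OF assms(2)])
    fix t assume t: "x \<le> t" "t \<le> y"
    have "exp (-t) * (t^n / fact n) \<le> exp (-t) * (\<Sum>m<Suc n. t^m / fact m)"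
      using t assms by (intro mult_left_mono) (simp_all add: sum_nonneg)
    then have "exp (-t) * t^n / fact n \<le> poisson_lower_tail (Suc n) t"
      by (simp add: poisson_lower_tail_def)
    also have "\<dots> \<le> 1" using t assms by (intro poisson_lower_tail_le_1) auto
    finally have "0 \<le> - exp (-t) * t^n / fact n + 1" by simp
    then show "\<exists>d. ((\<lambda>t. poisson_lower_tail (Suc n) t + t) has_real_derivative d) (at t) \<and> 0 \<le> d"
      using DERIV_add[OF poisson_lower_tail_has_real_derivative DERIV_ident] by blast
  qed
  then show ?thesis by simp
qed

lemma tendsto_poisson_lower_tail_at_top: "(poisson_lower_tail n \<longlongrightarrow> 0) at_top"
proof -
  have "poisson_lower_tail n = (\<lambda>s. \<Sum>m<n. s^m / exp s / fact m)"
    by (auto simp: fun_eq_iff poisson_lower_tail_def sum_distrib_left exp_minus field_simps)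
  moreover have "((\<lambda>s::real. \<Sum>m<n. s^m / exp s / fact m) \<longlongrightarrow> (\<Sum>m<n. 0 / fact m)) at_top"
    by (intro tendsto_sum tendsto_divide tendsto_power_div_exp_0 tendsto_const) auto
  ultimately show ?thesis by simp
qed

text \<open>An antiderivative of \<open>t \<mapsto> -\<lambda> exp(-\<lambda>t) P[Poisson(t) > n]\<close> vanishing at infinity, so its value at
  \<open>0\<close> is \<open>\<integral>\<^sub>0\<^sup>\<infinity> \<lambda> exp(-\<lambda>t) P[Poisson(t) > n] dt\<close>.\<close>
definition exp_mixed_tail :: "real \<Rightarrow> nat \<Rightarrow> real \<Rightarrow> real" where
  "exp_mixed_tail lam n t = exp (-(lam*t)) * (1 - poisson_lower_tail (Suc n) t)
     + (1/(1+lam))^Suc n * poisson_lower_tail (Suc n) ((1+lam)*t)"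

lemma exp_mixed_tail_at_0: "exp_mixed_tail lam n 0 = (1/(1+lam))^Suc n"
  by (simp add: exp_mixed_tail_def poisson_lower_tail_Suc_at_0)

lemma exp_mixed_tail_has_real_derivative:
  assumes lam: "lam > 0"
  shows "(exp_mixed_tail lam n has_real_derivative
           - lam * exp (-(lam*t)) * (1 - poisson_lower_tail (Suc n) t)) (at t)"
proof -
  have exp_deriv: "((\<lambda>t. exp (-(lam*t))) has_real_derivative - lam * exp (-(lam*t))) (at t)"
    by (auto intro!: derivative_eq_intros)
  have scaled_deriv: "((\<lambda>t. poisson_lower_tail (Suc n) ((1+lam)*t)) has_real_derivative
      - exp (-((1+lam)*t)) * ((1+lam)*t)^n / fact n * (1+lam)) (at t)"
    by (rule DERIV_chain2[OF poisson_lower_tail_has_real_derivative])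
       (auto intro!: derivative_eq_intros)
  have "exp (-((1+lam)*t)) = exp (-(lam*t)) * exp (-t)"
    by (simp add: exp_add[symmetric] algebra_simps)
  moreover have "(1/(1+lam))^Suc n * ((1+lam)*t)^n * (1+lam) = t^n"
  proof -
    have "(1/(1+lam))^Suc n * (1+lam)^Suc n = 1"
      using lam by (simp add: power_mult_distrib[symmetric])
    moreover have "(1/(1+lam))^Suc n * ((1+lam)*t)^n * (1+lam)
        = ((1/(1+lam))^Suc n * (1+lam)^Suc n) * t^n"
      by (simp add: power_mult_distrib)
    ultimately show ?thesis by simp
  qed
  ultimately have rescaled: "(1/(1+lam))^Suc n * (- exp (-((1+lam)*t)) * ((1+lam)*t)^n / fact n * (1+lam))
      = - exp (-(lam*t)) * exp (-t) * t^n / fact n"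
    by (simp add: mult_ac divide_inverse)
  show ?thesis
    unfolding exp_mixed_tail_def
    by (rule DERIV_cong[OF DERIV_add[OF DERIV_mult[OF exp_deriv
          DERIV_diff[OF DERIV_const poisson_lower_tail_has_real_derivative]] DERIV_cmult[OF scaled_deriv]]],
        unfold rescaled, simp add: algebra_simps)
qed
lemma exp_mixed_tail_diff_bounds:
  fixes n :: nat
  assumes lam: "lam > 0" and xy: "0 \<le> x" "x \<le> y"
  defines "g \<equiv> \<lambda>t. 1 - poisson_lower_tail (Suc n) t"
  shows "g x * (exp (-(lam*x)) - exp (-(lam*y))) \<le> exp_mixed_tail lam n x - exp_mixed_tail lam n y"
    and "exp_mixed_tail lam n x - exp_mixed_tail lam n y \<le> g y * (exp (-(lam*x)) - exp (-(lam*y)))"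
proof -
  have exp_deriv: "((\<lambda>s. exp (-(lam * s))) has_real_derivative - lam * exp (-(lam * s))) (at s)" for s
    by (auto intro!: derivative_eq_intros)
  have deriv: "((\<lambda>s. exp_mixed_tail lam n s - c * exp (-(lam * s))) has_real_derivative
      lam * exp (-(lam * s)) * (c - g s)) (at s)" for c s
    by (rule DERIV_cong[OF DERIV_diff[OF exp_mixed_tail_has_real_derivative[OF lam]
          DERIV_cmult[where c=c, OF exp_deriv]]])
       (simp add: g_def algebra_simps)
  have g_mono: "g s \<le> g s'" if "0 \<le> s" "s \<le> s'" for s s'
    using poisson_lower_tail_antimono[OF that] by (simp add: g_def)
  have "exp_mixed_tail lam n y - g x * exp (-(lam*y)) \<le> exp_mixed_tail lam n x - g x * exp (-(lam*x))"
  proof (rule DERIV_nonpos_imp_nonincreasing[OF xy(2)])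
    fix s assume "x \<le> s" "s \<le> y"
    then have "lam * exp (-(lam * s)) * (g x - g s) \<le> 0"
      using g_mono[of x s] xy lam by (simp add: mult_nonneg_nonpos)
    then show "\<exists>d. ((\<lambda>s. exp_mixed_tail lam n s - g x * exp (-(lam * s))) has_real_derivative d) (at s) \<and> d \<le> 0"
      using deriv by blast
  qed
  then show "g x * (exp (-(lam*x)) - exp (-(lam*y))) \<le> exp_mixed_tail lam n x - exp_mixed_tail lam n y"
    by (simp add: algebra_simps)
  have "exp_mixed_tail lam n x - g y * exp (-(lam*x)) \<le> exp_mixed_tail lam n y - g y * exp (-(lam*y))"
  proof (rule DERIV_nonneg_imp_nondecreasing[OF xy(2)])
    fix s assume "x \<le> s" "s \<le> y"
    then have "0 \<le> lam * exp (-(lam * s)) * (g y - g s)"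
      using g_mono[of s y] xy lam by simp
    then show "\<exists>d. ((\<lambda>s. exp_mixed_tail lam n s - g y * exp (-(lam * s))) has_real_derivative d) (at s) \<and> 0 \<le> d"
      using deriv by blast
  qed
  then show "exp_mixed_tail lam n x - exp_mixed_tail lam n y \<le> g y * (exp (-(lam*x)) - exp (-(lam*y)))"
    by (simp add: algebra_simps)
qed

lemma tendsto_exp_minus_scaled_at_top: "lam > 0 \<Longrightarrow> ((\<lambda>t::real. exp (-(lam*t))) \<longlongrightarrow> 0) at_top"
  by real_asymp

lemma tendsto_exp_mixed_tail_at_top:
  assumes lam: "lam > 0" shows "(exp_mixed_tail lam n \<longlongrightarrow> 0) at_top"
proof -
  have "filterlim (\<lambda>t. (1+lam)*t) at_top at_top"
    using lam by (intro filterlim_tendsto_pos_mult_at_top[OF tendsto_const _ filterlim_ident]) auto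
  then have "((\<lambda>t. poisson_lower_tail (Suc n) ((1+lam)*t)) \<longlongrightarrow> 0) at_top"
    by (rule filterlim_compose[OF tendsto_poisson_lower_tail_at_top])
  then have "(exp_mixed_tail lam n \<longlongrightarrow> 0 * (1 - 0) + (1/(1+lam))^Suc n * 0) at_top"
    unfolding exp_mixed_tail_def
    by (intro tendsto_intros tendsto_exp_minus_scaled_at_top[OF lam] tendsto_poisson_lower_tail_at_top)
  then show ?thesis by simp
qed

lemma filterlim_real_mult_sequentially: "h > 0 \<Longrightarrow> filterlim (\<lambda>k. real k * h) at_top sequentially"
  by (intro filterlim_at_top_mult_tendsto_pos[OF tendsto_const] filterlim_real_sequentially)

text \<open>The two series are the lower and upper Riemann--Stieltjes sums, with mesh \<open>h\<close>, of the
  integral evaluated by \<open>exp_mixed_tail\<close>.\<close>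
lemma exp_mixed_tail_riemann_sums:
  fixes n :: nat and lam h :: real
  assumes lam: "lam > 0" and h: "h > 0"
  defines "w \<equiv> \<lambda>k::nat. exp (-(lam * (real k * h))) - exp (-(lam * (real (Suc k) * h)))"
  defines "g \<equiv> \<lambda>k::nat. 1 - poisson_lower_tail (Suc n) (real k * h)"
  shows "summable (\<lambda>k. w k * g k)" "summable (\<lambda>k. w k * g (Suc k))"
    "(\<Sum>k. w k * g k) \<le> (1/(1+lam))^Suc n"
    "(1/(1+lam))^Suc n \<le> (\<Sum>k. w k * g (Suc k))"
    "(\<Sum>k. w k * g (Suc k)) \<le> (\<Sum>k. w k * g k) + h"
proof -
  note grid = filterlim_real_mult_sequentially[OF h]
  have w_sums: "w sums 1"
    using telescope_sums'[OF filterlim_compose[OF tendsto_exp_minus_scaled_at_top[OF lam] grid]]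
    by (simp add: w_def)
  have w_nonneg: "0 \<le> w k" for k
    unfolding w_def using lam h by (auto intro!: mult_right_mono)
  have g_bounds: "0 \<le> g k" "g k \<le> 1" for k
    unfolding g_def using h poisson_lower_tail_nonneg poisson_lower_tail_le_1 by auto
  let ?F = "\<lambda>k. exp_mixed_tail lam n (real k * h)"
  have F_sums: "(\<lambda>k. ?F k - ?F (Suc k)) sums (1/(1+lam))^Suc n"
    using telescope_sums'[OF filterlim_compose[OF tendsto_exp_mixed_tail_at_top[OF lam] grid]]
    by (simp add: exp_mixed_tail_at_0)
  have F_step: "w k * g k \<le> ?F k - ?F (Suc k)" "?F k - ?F (Suc k) \<le> w k * g (Suc k)" for k
    using exp_mixed_tail_diff_bounds[OF lam, of "real k * h" "real (Suc k) * h" n] h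
    unfolding w_def g_def by (auto simp: algebra_simps)
  have summable: "summable (\<lambda>k. w k * g (f k))" for f
    by (rule summable_comparison_test[OF _ sums_summable[OF w_sums]])
       (use w_nonneg g_bounds in \<open>auto intro!: exI[of _ 0] mult_left_le simp: abs_mult\<close>)
  show s1: "summable (\<lambda>k. w k * g k)" and s2: "summable (\<lambda>k. w k * g (Suc k))"
    using summable[of id] summable[of Suc] by simp_all
  show "(\<Sum>k. w k * g k) \<le> (1/(1+lam))^Suc n"
    using suminf_le[OF F_step(1) s1 sums_summable[OF F_sums]] sums_unique[OF F_sums] by simp
  show "(1/(1+lam))^Suc n \<le> (\<Sum>k. w k * g (Suc k))"
    using suminf_le[OF F_step(2) sums_summable[OF F_sums] s2] sums_unique[OF F_sums] by simp
  have "w k * g (Suc k) - w k * g k \<le> w k * h" for k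
  proof -
    have "g (Suc k) - g k \<le> h"
      using poisson_lower_tail_lipschitz[of "real k * h" "real (Suc k) * h" n] h
      unfolding g_def by (auto simp: algebra_simps)
    then show ?thesis using w_nonneg[of k] by (simp add: right_diff_distrib[symmetric] mult_left_mono)
  qed
  then have "(\<Sum>k. w k * g (Suc k) - w k * g k) \<le> (\<Sum>k. w k * h)"
    by (intro suminf_le summable_diff s1 s2 summable_mult2 sums_summable[OF w_sums])
  also have "\<dots> = h" using sums_unique[OF sums_mult2[OF w_sums, of h]] by simp
  finally show "(\<Sum>k. w k * g (Suc k)) \<le> (\<Sum>k. w k * g k) + h"
    using suminf_diff[OF s2 s1] by simp
qed

lemma pcount_eq_0_iff: "finite (S \<inter> A) \<Longrightarrow> pcount S A = 0 \<longleftrightarrow> S \<inter> A = {}"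
  by (simp add: pcount_def)

lemma one_le_pcount_iff: "finite (S \<inter> A) \<Longrightarrow> 1 \<le> pcount S A \<longleftrightarrow> S \<inter> A \<noteq> {}"
  by (auto simp: pcount_def Suc_le_eq card_gt_0_iff)

lemma out_neighbours_subset_ball:
  "p \<in> S \<Longrightarrow> {y \<in> insert 0 P. out_edge S 0 y} \<subseteq> P \<inter> (ball 0 (norm p) - {0})"
  by (auto simp: out_edge_def dist_norm not_le[symmetric])

lemma out_neighbours_superset_cball:
  "S \<inter> cball 0 r = {} \<Longrightarrow> P \<inter> (cball 0 r - {0}) \<subseteq> {y \<in> insert 0 P. out_edge S 0 y}"
  by (auto simp: out_edge_def dist_norm)

lemma out_degree_origin_eq_0:
  assumes "0 \<in> S" shows "out_degree_origin P S = 0"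
proof -
  have "{y \<in> insert 0 P. out_edge S 0 y} = {}" using assms by (auto simp: out_edge_def)
  then show ?thesis unfolding out_degree_origin_def by (simp only: card.empty)
qed

lemma out_degree_origin_empty: "out_degree_origin P {} = card (P - {0})"
proof -
  have "{y \<in> insert 0 P. out_edge {} 0 y} = P - {0}" by (auto simp: out_edge_def)
  then show ?thesis by (simp add: out_degree_origin_def)
qed

lemma card_le_out_degree_origin:
  assumes "S \<inter> cball 0 r = {}" "p \<in> S" "finite (P \<inter> ball 0 (norm p))"
  shows "card (P \<inter> (cball 0 r - {0})) \<le> out_degree_origin P S"
proof -
  have "finite {y \<in> insert 0 P. out_edge S 0 y}"
    by (rule finite_subset[OF _ assms(3)]) (use out_neighbours_subset_ball[OF assms(2), of P] in auto)
  then show ?thesis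
    unfolding out_degree_origin_def by (rule card_mono[OF _ out_neighbours_superset_cball[OF assms(1)]])
qed

lemma out_degree_origin_le_card:
  assumes "p \<in> S" "norm p \<le> r" "finite (P \<inter> (cball 0 r - {0}))"
  shows "out_degree_origin P S \<le> card (P \<inter> (cball 0 r - {0}))"
  unfolding out_degree_origin_def
  by (rule card_mono[OF assms(3)]) (use out_neighbours_subset_ball[OF assms(1), of P] assms(2) in auto)

lemma bounded_subset_cball_nat:
  assumes "bounded (B::'a::real_normed_vector set)" obtains j :: nat where "B \<subseteq> cball 0 (real j)"
proof -
  obtain a where "\<forall>x\<in>B. norm x \<le> a" using assms bounded_iff by blast
  moreover obtain j :: nat where "a \<le> real j" using real_arch_simple by blast
  ultimately have "B \<subseteq> cball 0 (real j)" by (auto simp: dist_norm)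
  then show ?thesis by (rule that)
qed

text \<open>For measurability: the out-degree is determined by the counts in countably many disks.\<close>
lemma le_out_degree_origin_iff_rational_disk:
  fixes P S :: "(real^2) set"
  assumes finP: "\<And>A. bounded A \<Longrightarrow> finite (P \<inter> A)" and finS: "\<And>A. bounded A \<Longrightarrow> finite (S \<inter> A)"
    and "S \<noteq> {}" and "N \<ge> 1"
  shows "N \<le> out_degree_origin P S \<longleftrightarrow>
    (\<exists>r\<in>\<rat>. pcount S (cball 0 r) = 0 \<and> N \<le> pcount P (cball 0 r - {0}))"
proof
  assume "\<exists>r\<in>\<rat>. pcount S (cball 0 r) = 0 \<and> N \<le> pcount P (cball 0 r - {0})"
  then obtain r where r: "pcount S (cball 0 r) = 0" "N \<le> pcount P (cball 0 r - {0})" by blast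
  obtain p where "p \<in> S" using \<open>S \<noteq> {}\<close> by blast
  moreover have "S \<inter> cball 0 r = {}" using r(1) pcount_eq_0_iff[OF finS] by blast
  ultimately show "N \<le> out_degree_origin P S"
    using card_le_out_degree_origin[of S r p P] finP r(2) by (force simp: pcount_def)
next
  let ?O = "{y \<in> insert 0 P. out_edge S 0 y}"
  assume "N \<le> out_degree_origin P S"
  then have cO: "N \<le> card ?O" by (simp add: out_degree_origin_def)
  then have "0 < card ?O" using \<open>N \<ge> 1\<close> by linarith
  then have "finite ?O" "?O \<noteq> {}" unfolding card_gt_0_iff by auto
  define r0 where "r0 = Max (norm ` ?O)"
  have "r0 \<in> norm ` ?O" unfolding r0_def using \<open>finite ?O\<close> \<open>?O \<noteq> {}\<close> by (intro Max_in) auto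
  then obtain y0 where "y0 \<in> ?O" "r0 = norm y0" by auto
  then have S_r0: "S \<inter> cball 0 r0 = {}" by (simp add: out_edge_def dist_norm)
  have O_r0: "norm y \<le> r0" if "y \<in> ?O" for y
    unfolding r0_def using \<open>finite ?O\<close> that by simp
  text \<open>A rational radius between \<open>r0\<close> and the distance to the nearest point of \<open>S\<close>.\<close>
  define F where "F = S \<inter> cball 0 (r0 + 1)"
  have "finite F" unfolding F_def by (rule finS[OF bounded_cball])
  define d where "d = Min (insert (r0 + 1) (norm ` F))"
  have "r0 < d"
    unfolding d_def using \<open>finite F\<close> S_r0 by (subst Min_gr_iff) (auto simp: F_def dist_norm)
  then obtain r where r: "r \<in> \<rat>" "r0 < r" "r < d" using Rats_dense_in_real by blast
  have "S \<inter> cball 0 r = {}"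
  proof (rule ccontr)
    assume "S \<inter> cball 0 r \<noteq> {}"
    then obtain p where p: "p \<in> S" "norm p \<le> r" by (auto simp: dist_norm)
    moreover have "d \<le> r0 + 1" unfolding d_def using \<open>finite F\<close> by simp
    ultimately have "p \<in> F" using r by (auto simp: F_def dist_norm)
    then have "d \<le> norm p" unfolding d_def using \<open>finite F\<close> by simp
    then show False using p r by linarith
  qed
  moreover have "?O \<subseteq> P \<inter> (cball 0 r - {0})"
    using O_r0 r(2) by (fastforce simp: out_edge_def dist_norm)
  then have "card ?O \<le> pcount P (cball 0 r - {0})"
    unfolding pcount_def by (rule card_mono[OF finP[OF bounded_diff[OF bounded_cball]]])
  ultimately show "\<exists>r\<in>\<rat>. pcount S (cball 0 r) = 0 \<and> N \<le> pcount P (cball 0 r - {0})"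
    using r(1) cO by (intro bexI[of _ r]) (auto simp: pcount_def)
qed

lemma le_card_iff_punctured_counts_stabilize:
  fixes P :: "(real^2) set"
  assumes finP: "\<And>A. bounded A \<Longrightarrow> finite (P \<inter> A)" and "N \<ge> 1"
  defines "c \<equiv> \<lambda>j::nat. pcount P (cball 0 (real j) - {0})"
  shows "N \<le> card (P - {0}) \<longleftrightarrow> (\<exists>j. N \<le> c j \<and> (\<forall>j'. c j' \<le> c j))"
proof
  assume N: "N \<le> card (P - {0})"
  then have "card (P - {0}) \<noteq> 0" using \<open>N \<ge> 1\<close> by linarith
  then have fin: "finite (P - {0})" by (meson card.infinite)
  obtain j where "P - {0} \<subseteq> cball 0 (real j)"
    using bounded_subset_cball_nat[OF finite_imp_bounded[OF fin]] .
  then have "P \<inter> (cball 0 (real j) - {0}) = P - {0}" by auto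
  then have "c j = card (P - {0})" by (simp add: c_def pcount_def)
  moreover have "c j' \<le> card (P - {0})" for j'
    unfolding c_def pcount_def using fin by (intro card_mono) auto
  ultimately show "\<exists>j. N \<le> c j \<and> (\<forall>j'. c j' \<le> c j)" using N by metis
next
  assume "\<exists>j. N \<le> c j \<and> (\<forall>j'. c j' \<le> c j)"
  then obtain j where j: "N \<le> c j" "\<forall>j'. c j' \<le> c j" by blast
  have fin: "finite (P - {0})"
  proof (rule ccontr)
    assume "infinite (P - {0})"
    then obtain B where B: "finite B" "card B = Suc (c j)" "B \<subseteq> P - {0}"
      using infinite_arbitrarily_large by blast
    obtain j' where "B \<subseteq> cball 0 (real j')"
      using bounded_subset_cball_nat[OF finite_imp_bounded[OF B(1)]] .
    then have "B \<subseteq> P \<inter> (cball 0 (real j') - {0})" using B(3) by auto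
    then have "card B \<le> c j'"
      unfolding c_def pcount_def by (rule card_mono[OF finP[OF bounded_diff[OF bounded_cball]]])
    then have "Suc (c j) \<le> c j'" using B(2) by simp
    then show False using j(2) by (metis not_less_eq_eq)
  qed
  have "c j \<le> card (P - {0})" unfolding c_def pcount_def using fin by (intro card_mono) auto
  then show "N \<le> card (P - {0})" using j by linarith
qed

definition area_disk :: "real \<Rightarrow> nat \<Rightarrow> (real^2) set" where
  "area_disk h k = cball 0 (sqrt (real k * h / pi))"

lemma area_disk_sets [measurable]: "area_disk h k \<in> sets borel"
  by (simp add: area_disk_def)

lemma bounded_area_disk [intro]: "bounded (area_disk h k)"
  by (simp add: area_disk_def)

lemma area_disk_0: "area_disk h 0 = {0}"
  by (simp add: area_disk_def)

lemma area_disk_mono: "0 \<le> h \<Longrightarrow> k \<le> k' \<Longrightarrow> area_disk h k \<subseteq> area_disk h k'"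
  unfolding area_disk_def
  by (intro cball_subset_cball_iff[THEN iffD2] disjI1)
     (auto intro!: real_sqrt_le_mono divide_right_mono mult_right_mono)

lemma measure_area_disk: "0 \<le> h \<Longrightarrow> measure lborel (area_disk h k) = real k * h"
  by (simp add: area_disk_def content_cball eval_unit_ball_vol)

lemma measure_punctured_area_disk: "0 \<le> h \<Longrightarrow> measure lborel (area_disk h k - {0}) = real k * h"
  by (subst measure_Diff_null_set) (simp_all add: measure_area_disk finite_imp_null_set_lborel)

lemma measure_area_annulus:
  assumes "0 \<le> h" shows "measure lborel (area_disk h (Suc k) - area_disk h k) = h"
proof -
  have "area_disk h k \<subseteq> area_disk h (Suc k)" using assms by (intro area_disk_mono) auto
  moreover have "emeasure lborel (area_disk h (Suc k)) \<noteq> \<infinity>"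
    using emeasure_bounded_finite[OF bounded_area_disk] by (simp add: less_top)
  ultimately show ?thesis by (simp add: measure_Diff measure_area_disk assms algebra_simps)
qed

lemma area_disks_cover: "0 < h \<Longrightarrow> \<exists>k. p \<in> area_disk h k"
proof -
  assume h: "0 < h"
  obtain k :: nat where "norm p ^ 2 * pi / h \<le> real k" using real_arch_simple by blast
  then have "norm p ^ 2 \<le> real k * h / pi" using h by (simp add: field_simps)
  then have "norm p \<le> sqrt (real k * h / pi)" by (simp add: real_le_rsqrt)
  then show ?thesis by (auto simp: area_disk_def dist_norm)
qed

lemma (in prob_space) prob_ge_of_poisson:
  assumes "\<And>k. {\<omega>\<in>space M. X \<omega> = k} \<in> events"
    and "\<And>k. prob {\<omega>\<in>space M. X \<omega> = k} = mu^k / fact k * exp (-mu)"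
  shows "prob {\<omega>\<in>space M. N \<le> (X \<omega> :: nat)} = 1 - poisson_lower_tail N mu"
proof -
  have less_events: "{\<omega>\<in>space M. X \<omega> < K} \<in> events" for K
  proof -
    have "{\<omega>\<in>space M. X \<omega> < K} = (\<Union>k<K. {\<omega>\<in>space M. X \<omega> = k})" by auto
    then show ?thesis using assms(1) by auto
  qed
  have prob_less: "prob {\<omega>\<in>space M. X \<omega> < K} = (\<Sum>k<K. mu^k / fact k * exp (-mu))" for K
  proof (induction K)
    case (Suc K)
    have "{\<omega>\<in>space M. X \<omega> < Suc K} = {\<omega>\<in>space M. X \<omega> < K} \<union> {\<omega>\<in>space M. X \<omega> = K}" by auto
    then have "prob {\<omega>\<in>space M. X \<omega> < Suc K} = prob {\<omega>\<in>space M. X \<omega> < K} + prob {\<omega>\<in>space M. X \<omega> = K}"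
      by (simp add: finite_measure_Union[OF less_events assms(1)] disjoint_iff)
    then show ?case using Suc assms(2) by simp
  qed simp
  have "{\<omega>\<in>space M. N \<le> X \<omega>} = space M - {\<omega>\<in>space M. X \<omega> < N}" by auto
  then have "prob {\<omega>\<in>space M. N \<le> X \<omega>} = 1 - prob {\<omega>\<in>space M. X \<omega> < N}"
    using prob_compl[OF less_events] by simp
  then show ?thesis
    unfolding prob_less poisson_lower_tail_def by (simp add: sum_distrib_left algebra_simps)
qed

locale indep_poisson_pair =
  fixes M :: "'w measure" and Phi Psi :: "'w \<Rightarrow> (real^2) set" and lam :: real
  assumes indep_poisson: "indep_poisson_pps M Phi 1 Psi lam" and lam_pos: "lam > 0"
begin

sublocale prob_space M
  using indep_poisson by (simp add: indep_poisson_pps_def)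

lemma finite_Phi: "\<omega> \<in> space M \<Longrightarrow> bounded A \<Longrightarrow> finite (Phi \<omega> \<inter> A)"
  and finite_Psi: "\<omega> \<in> space M \<Longrightarrow> bounded A \<Longrightarrow> finite (Psi \<omega> \<inter> A)"
  using indep_poisson by (simp_all add: indep_poisson_pps_def)

lemma events_count_Phi: "A \<in> sets lborel \<Longrightarrow> bounded A \<Longrightarrow> {\<omega>\<in>space M. Q (pcount (Phi \<omega>) A)} \<in> events"
  and events_count_Psi: "A \<in> sets lborel \<Longrightarrow> bounded A \<Longrightarrow> {\<omega>\<in>space M. Q (pcount (Psi \<omega>) A)} \<in> events"
proof -
  assume "A \<in> sets lborel" "bounded A"
  then have "(\<lambda>\<omega>. pcount (Phi \<omega>) A) \<in> measurable M (count_space UNIV)"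
    "(\<lambda>\<omega>. pcount (Psi \<omega>) A) \<in> measurable M (count_space UNIV)"
    using indep_poisson by (simp_all add: indep_poisson_pps_def)
  from this[THEN measurable_sets, of "{k. Q k}"]
  show "{\<omega>\<in>space M. Q (pcount (Phi \<omega>) A)} \<in> events" "{\<omega>\<in>space M. Q (pcount (Psi \<omega>) A)} \<in> events"
    by (simp_all add: vimage_def Int_def conj_commute)
qed

lemma prob_count_Phi_ge: "A \<in> sets lborel \<Longrightarrow> bounded A \<Longrightarrow>
    prob {\<omega>\<in>space M. N \<le> pcount (Phi \<omega>) A} = 1 - poisson_lower_tail N (measure lborel A)"
  by (rule prob_ge_of_poisson) (use indep_poisson events_count_Phi in \<open>auto simp: indep_poisson_pps_def\<close>)

lemma prob_count_Psi_ge: "A \<in> sets lborel \<Longrightarrow> bounded A \<Longrightarrow>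
    prob {\<omega>\<in>space M. N \<le> pcount (Psi \<omega>) A} = 1 - poisson_lower_tail N (lam * measure lborel A)"
  by (rule prob_ge_of_poisson) (use indep_poisson events_count_Psi in \<open>auto simp: indep_poisson_pps_def\<close>)

lemma prob_count_Psi_eq_0: "A \<in> sets lborel \<Longrightarrow> bounded A \<Longrightarrow>
    prob {\<omega>\<in>space M. pcount (Psi \<omega>) A = 0} = exp (-(lam * measure lborel A))"
  using indep_poisson by (simp add: indep_poisson_pps_def)

lemma prob_count_Phi_Psi_Psi:
  assumes "A \<in> sets lborel" "bounded A" "B \<in> sets lborel" "bounded B" "C \<in> sets lborel" "bounded C"
    and "B \<inter> C = {}"
  shows "prob {\<omega>\<in>space M. pcount (Phi \<omega>) A \<in> SA \<and> pcount (Psi \<omega>) B \<in> SB \<and> pcount (Psi \<omega>) C \<in> SC}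
    = prob {\<omega>\<in>space M. pcount (Phi \<omega>) A \<in> SA} * prob {\<omega>\<in>space M. pcount (Psi \<omega>) B \<in> SB}
      * prob {\<omega>\<in>space M. pcount (Psi \<omega>) C \<in> SC}"
proof -
  define As :: "nat \<Rightarrow> (real^2) set" where "As = (\<lambda>i. if i = 0 then A else {})"
  define Bs :: "nat \<Rightarrow> (real^2) set" where "Bs = (\<lambda>i. if i = 0 then B else C)"
  define X where "X = (\<lambda>j \<omega>. case j of Inl i \<Rightarrow> pcount (Phi \<omega>) (As i) | Inr i \<Rightarrow> pcount (Psi \<omega>) (Bs i))"
  define S :: "nat + nat \<Rightarrow> nat set" where "S = case_sum (\<lambda>_. SA) (\<lambda>i. if i = 0 then SB else SC)"
  define J :: "(nat + nat) set" where "J = {Inl 0, Inr 0, Inr 1}"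
  have "finite {0, 1::nat}" by simp
  moreover have "\<forall>i\<in>{0, 1}. As i \<in> sets lborel \<and> bounded (As i) \<and> Bs i \<in> sets lborel \<and> bounded (Bs i)"
    using assms by (auto simp: As_def Bs_def)
  moreover have "disjoint_family_on As {0, 1}" "disjoint_family_on Bs {0, 1}"
    using assms by (auto simp: disjoint_family_on_def As_def Bs_def)
  ultimately have "indep_vars (\<lambda>_. count_space UNIV) X (Inl ` {0, 1} \<union> Inr ` {0, 1})"
    using indep_poisson unfolding indep_poisson_pps_def X_def by blast
  then have "prob (\<Inter>j\<in>J. X j -` S j \<inter> space M) = (\<Prod>j\<in>J. prob (X j -` S j \<inter> space M))"
    by (rule indep_varsD) (auto simp: J_def)
  moreover have "(\<Inter>j\<in>J. X j -` S j \<inter> space M) =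
      {\<omega>\<in>space M. pcount (Phi \<omega>) A \<in> SA \<and> pcount (Psi \<omega>) B \<in> SB \<and> pcount (Psi \<omega>) C \<in> SC}"
    by (auto simp: J_def X_def S_def As_def Bs_def)
  moreover have "X (Inl 0) -` S (Inl 0) \<inter> space M = {\<omega>\<in>space M. pcount (Phi \<omega>) A \<in> SA}"
    "X (Inr 0) -` S (Inr 0) \<inter> space M = {\<omega>\<in>space M. pcount (Psi \<omega>) B \<in> SB}"
    "X (Inr 1) -` S (Inr 1) \<inter> space M = {\<omega>\<in>space M. pcount (Psi \<omega>) C \<in> SC}"
    by (auto simp: X_def S_def As_def Bs_def)
  ultimately show ?thesis by (simp add: J_def mult.assoc)
qed

end

context indep_poisson_pair
begin

definition out_degree_ge :: "nat \<Rightarrow> 'w set" where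
  "out_degree_ge m = {\<omega>\<in>space M. m \<le> out_degree_origin (Phi \<omega>) (Psi \<omega>)}"

definition Psi_empty :: "'w set" where
  "Psi_empty = {\<omega>\<in>space M. Psi \<omega> = {}}"

lemma Psi_empty_eq: "Psi_empty = (\<Inter>k. {\<omega>\<in>space M. pcount (Psi \<omega>) (area_disk 1 k) = 0})"
proof (intro equalityI subsetI)
  fix \<omega> assume \<omega>: "\<omega> \<in> (\<Inter>k. {\<omega>\<in>space M. pcount (Psi \<omega>) (area_disk 1 k) = 0})"
  then have "\<omega> \<in> space M" by auto
  then have "Psi \<omega> \<inter> area_disk 1 k = {}" for k
    using \<omega> pcount_eq_0_iff[OF finite_Psi] by blast
  then show "\<omega> \<in> Psi_empty"
    using area_disks_cover[of 1] \<open>\<omega> \<in> space M\<close> by (fastforce simp: Psi_empty_def)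
qed (auto simp: Psi_empty_def pcount_def)

lemma Psi_empty_events: "Psi_empty \<in> events"
  unfolding Psi_empty_eq by (intro sets.countable_INT image_subsetI events_count_Psi[where Q="\<lambda>c. c = 0"]) auto

lemma prob_Psi_empty: "prob Psi_empty = 0"
proof -
  have "prob Psi_empty \<le> exp (-(lam * (real k * 1)))" for k
  proof -
    have "prob Psi_empty \<le> prob {\<omega>\<in>space M. pcount (Psi \<omega>) (area_disk 1 k) = 0}"
      unfolding Psi_empty_eq by (intro finite_measure_mono events_count_Psi[where Q="\<lambda>c. c = 0"]) auto
    also have "\<dots> = exp (-(lam * (real k * 1)))"
      by (simp add: prob_count_Psi_eq_0 measure_area_disk bounded_area_disk)
    finally show ?thesis .
  qed
  then have "prob Psi_empty \<le> 0"
    using LIMSEQ_le_const[OF filterlim_compose[OF tendsto_exp_minus_scaled_at_top[OF lam_pos]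
          filterlim_real_mult_sequentially[of 1]]] by simp
  then show ?thesis using measure_nonneg[of M Psi_empty] by linarith
qed

lemma out_degree_ge_events: "out_degree_ge m \<in> events"
proof (cases m)
  case 0
  then show ?thesis by (simp add: out_degree_ge_def)
next
  case (Suc n)
  define R where "R = (\<Union>r\<in>\<rat>. {\<omega>\<in>space M. pcount (Psi \<omega>) (cball 0 r) = 0}
      \<inter> {\<omega>\<in>space M. m \<le> pcount (Phi \<omega>) (cball 0 r - {0})})"
  define c where "c = (\<lambda>\<omega> (j::nat). pcount (Phi \<omega>) (cball 0 (real j) - {0}))"
  define X where "X = (\<Union>j. \<Union>a\<in>{m..}. {\<omega>\<in>space M. c \<omega> j = a} \<inter> (\<Inter>j'. {\<omega>\<in>space M. c \<omega> j' \<le> a}))"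
  have "R \<in> events" unfolding R_def
    by (intro sets.countable_UN' countable_rat image_subsetI sets.Int events_count_Psi[where Q="\<lambda>c. c = 0"]
        events_count_Phi[where Q="\<lambda>c. m \<le> c"]) auto
  moreover have "X \<in> events" unfolding X_def c_def
    by (intro sets.countable_UN sets.countable_INT sets.Int image_subsetI
        events_count_Phi[where Q="\<lambda>c. c = _"] events_count_Phi[where Q="\<lambda>c. c \<le> _"]) auto
  moreover have "out_degree_ge m = ((space M - Psi_empty) \<inter> R) \<union> (Psi_empty \<inter> X)"
  proof -
    have "\<omega> \<in> out_degree_ge m \<longleftrightarrow> \<omega> \<in> ((space M - Psi_empty) \<inter> R) \<union> (Psi_empty \<inter> X)"
      if "\<omega> \<in> space M" for \<omega>
    proof (cases "Psi \<omega> = {}")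
      case True
      then show ?thesis
        using le_card_iff_punctured_counts_stabilize[OF finite_Phi[OF that], of m] that \<open>m = Suc n\<close>
        by (auto simp: out_degree_ge_def Psi_empty_def X_def c_def out_degree_origin_empty)
    next
      case False
      then show ?thesis
        using le_out_degree_origin_iff_rational_disk[OF finite_Phi[OF that] finite_Psi[OF that] False, of m]
          that \<open>m = Suc n\<close>
        by (auto simp: out_degree_ge_def Psi_empty_def R_def)
    qed
    then show ?thesis by (auto simp: out_degree_ge_def Psi_empty_def)
  qed
  ultimately show ?thesis using Psi_empty_events by auto
qed

definition shell_event :: "real \<Rightarrow> nat \<Rightarrow> nat \<Rightarrow> nat \<Rightarrow> 'w set" where
  "shell_event h n j k = {\<omega>\<in>space M. Suc n \<le> pcount (Phi \<omega>) (area_disk h j - {0})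
      \<and> pcount (Psi \<omega>) (area_disk h k) = 0 \<and> 1 \<le> pcount (Psi \<omega>) (area_disk h (Suc k) - area_disk h k)}"

lemma shell_event_events: "shell_event h n j k \<in> events"
  unfolding shell_event_def
  by (intro sets.sets_Collect_conj events_count_Phi events_count_Psi) auto

lemma Psi_in_annulus:
  assumes "\<omega> \<in> shell_event h n j k"
  shows "Psi \<omega> \<inter> area_disk h k = {}" "Psi \<omega> \<inter> (area_disk h (Suc k) - area_disk h k) \<noteq> {}"
proof -
  have "\<omega> \<in> space M" using assms by (simp add: shell_event_def)
  then show "Psi \<omega> \<inter> area_disk h k = {}" "Psi \<omega> \<inter> (area_disk h (Suc k) - area_disk h k) \<noteq> {}"
    using assms pcount_eq_0_iff[OF finite_Psi] one_le_pcount_iff[OF finite_Psi]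
      bounded_area_disk bounded_diff[OF bounded_area_disk]
    by (auto simp: shell_event_def)
qed

lemma prob_shell_event:
  assumes "h > 0"
  shows "prob (shell_event h n j k)
    = (exp (-(lam * (real k * h))) - exp (-(lam * (real (Suc k) * h))))
      * (1 - poisson_lower_tail (Suc n) (real j * h))"
proof -
  have shell_event_as_counts: "shell_event h n j k =
      {\<omega>\<in>space M. pcount (Phi \<omega>) (area_disk h j - {0}) \<in> {Suc n..}
      \<and> pcount (Psi \<omega>) (area_disk h k) \<in> {0}
      \<and> pcount (Psi \<omega>) (area_disk h (Suc k) - area_disk h k) \<in> {1..}}"
    by (auto simp: shell_event_def)
  have factor: "prob (shell_event h n j k)
      = prob {\<omega>\<in>space M. pcount (Phi \<omega>) (area_disk h j - {0}) \<in> {Suc n..}}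
      * prob {\<omega>\<in>space M. pcount (Psi \<omega>) (area_disk h k) \<in> {0}}
      * prob {\<omega>\<in>space M. pcount (Psi \<omega>) (area_disk h (Suc k) - area_disk h k) \<in> {1..}}"
    unfolding shell_event_as_counts by (rule prob_count_Phi_Psi_Psi) auto
  have Phi_factor: "prob {\<omega>\<in>space M. pcount (Phi \<omega>) (area_disk h j - {0}) \<in> {Suc n..}}
      = 1 - poisson_lower_tail (Suc n) (real j * h)"
    using prob_count_Phi_ge[of "area_disk h j - {0}" "Suc n"] assms
    by (simp add: bounded_diff[OF bounded_area_disk] measure_punctured_area_disk)
  have Psi_factor: "prob {\<omega>\<in>space M. pcount (Psi \<omega>) (area_disk h k) \<in> {0}} = exp (-(lam * (real k * h)))"
    using prob_count_Psi_eq_0[of "area_disk h k"] assms by (simp add: bounded_area_disk measure_area_disk)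
  have annulus_factor: "prob {\<omega>\<in>space M. pcount (Psi \<omega>) (area_disk h (Suc k) - area_disk h k) \<in> {1..}}
      = 1 - exp (-(lam * h))"
    using prob_count_Psi_ge[of "area_disk h (Suc k) - area_disk h k" 1] assms
    by (simp add: bounded_diff[OF bounded_area_disk] measure_area_annulus poisson_lower_tail_Suc_0)
  have exp_split: "exp (-(lam * (real (Suc k) * h))) = exp (-(lam * (real k * h))) * exp (-(lam * h))"
    by (simp add: exp_add[symmetric] algebra_simps)
  show ?thesis
    unfolding factor Phi_factor Psi_factor annulus_factor exp_split by (simp add: algebra_simps)
qed

lemma shell_event_subset_out_degree_ge: "shell_event h n k k \<subseteq> out_degree_ge (Suc n)"
proof
  fix \<omega> assume \<omega>: "\<omega> \<in> shell_event h n k k"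
  then have "\<omega> \<in> space M" by (simp add: shell_event_def)
  obtain p where "p \<in> Psi \<omega>" using Psi_in_annulus(2)[OF \<omega>] by blast
  then have "card (Phi \<omega> \<inter> (area_disk h k - {0})) \<le> out_degree_origin (Phi \<omega>) (Psi \<omega>)"
    using card_le_out_degree_origin Psi_in_annulus(1)[OF \<omega>] finite_Phi[OF \<open>\<omega> \<in> space M\<close> bounded_ball]
    unfolding area_disk_def by blast
  then show "\<omega> \<in> out_degree_ge (Suc n)"
    using \<omega> by (auto simp: shell_event_def out_degree_ge_def pcount_def)
qed

lemma disjoint_family_shell_event:
  assumes "h > 0" shows "disjoint_family (\<lambda>k. shell_event h n (f k) k)"
proof -
  have "shell_event h n (f k) k \<inter> shell_event h n (f k') k' = {}" if "k < k'" for k k'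
  proof -
    have "area_disk h (Suc k) \<subseteq> area_disk h k'" using assms that by (intro area_disk_mono) auto
    then show ?thesis using Psi_in_annulus[of _ h n] by blast
  qed
  then show ?thesis
    unfolding disjoint_family_on_def by (metis Int_commute linorder_neqE_nat)
qed

lemma out_degree_ge_subset_shell_events:
  assumes "h > 0" shows "out_degree_ge (Suc n) \<subseteq> Psi_empty \<union> (\<Union>k. shell_event h n (Suc k) k)"
proof
  fix \<omega> assume "\<omega> \<in> out_degree_ge (Suc n)"
  then have \<omega>: "\<omega> \<in> space M" and deg: "Suc n \<le> out_degree_origin (Phi \<omega>) (Psi \<omega>)"
    by (auto simp: out_degree_ge_def)
  show "\<omega> \<in> Psi_empty \<union> (\<Union>k. shell_event h n (Suc k) k)"
  proof (cases "Psi \<omega> = {}")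
    case True
    then show ?thesis using \<omega> by (simp add: Psi_empty_def)
  next
    case False
    then have "\<exists>k. Psi \<omega> \<inter> area_disk h k \<noteq> {}" using area_disks_cover[OF assms] by blast
    text \<open>The first disk meeting \<open>Psi\<close> is not \<open>area_disk h 0 = {0}\<close>, since the out-degree is positive.\<close>
    then obtain k where k: "Psi \<omega> \<inter> area_disk h (Suc k) \<noteq> {}" "Psi \<omega> \<inter> area_disk h k = {}"
      using deg out_degree_origin_eq_0 area_disk_0 exists_least_lemma[of "\<lambda>k. Psi \<omega> \<inter> area_disk h k \<noteq> {}"]
      by fastforce
    then obtain p where "p \<in> Psi \<omega>" "norm p \<le> sqrt (real (Suc k) * h / pi)"
      by (auto simp: area_disk_def dist_norm)
    then have "Suc n \<le> card (Phi \<omega> \<inter> (area_disk h (Suc k) - {0}))"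
      using out_degree_origin_le_card finite_Phi[OF \<omega> bounded_diff[OF bounded_area_disk]] deg
      unfolding area_disk_def by (meson le_trans)
    then have "\<omega> \<in> shell_event h n (Suc k) k"
      using k \<omega> finite_Psi[OF \<omega>, of "area_disk h (Suc k) - area_disk h k"]
      by (auto simp: shell_event_def pcount_def Suc_le_eq card_gt_0_iff)
    then show ?thesis by blast
  qed
qed

lemma prob_out_degree_ge: "prob (out_degree_ge m) = (1/(1+lam))^m"
proof (cases m)
  case 0
  then show ?thesis by (simp add: out_degree_ge_def prob_space)
next
  case (Suc n)
  have mesh: "\<bar>prob (out_degree_ge (Suc n)) - (1/(1+lam))^Suc n\<bar> \<le> h" if h: "h > 0" for h
  proof -
    define w where "w \<equiv> \<lambda>k::nat. exp (-(lam * (real k * h))) - exp (-(lam * (real (Suc k) * h)))"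
    define g where "g \<equiv> \<lambda>k::nat. 1 - poisson_lower_tail (Suc n) (real k * h)"
    have sums: "summable (\<lambda>k. w k * g k)" "summable (\<lambda>k. w k * g (Suc k))"
      "(\<Sum>k. w k * g k) \<le> (1/(1+lam))^Suc n" "(1/(1+lam))^Suc n \<le> (\<Sum>k. w k * g (Suc k))"
      "(\<Sum>k. w k * g (Suc k)) \<le> (\<Sum>k. w k * g k) + h"
      using exp_mixed_tail_riemann_sums[OF lam_pos h, of n] unfolding w_def g_def by auto
    have prob_shell: "prob (shell_event h n j k) = w k * g j" for j k
      using prob_shell_event[OF h] by (simp add: w_def g_def)
    have "(\<lambda>k. prob (shell_event h n k k)) sums prob (\<Union>k. shell_event h n k k)"
      by (rule finite_measure_UNION)
         (use shell_event_events disjoint_family_shell_event[OF h, of n id] in auto)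
    then have "(\<Sum>k. w k * g k) = prob (\<Union>k. shell_event h n k k)"
      by (simp add: sums_iff prob_shell)
    also have "\<dots> \<le> prob (out_degree_ge (Suc n))"
      by (intro finite_measure_mono out_degree_ge_events) (use shell_event_subset_out_degree_ge in blast)
    finally have lower: "(\<Sum>k. w k * g k) \<le> prob (out_degree_ge (Suc n))" .
    have "prob (out_degree_ge (Suc n)) \<le> prob (Psi_empty \<union> (\<Union>k. shell_event h n (Suc k) k))"
      by (rule finite_measure_mono[OF out_degree_ge_subset_shell_events[OF h]])
         (auto intro: Psi_empty_events shell_event_events)
    also have "\<dots> \<le> prob Psi_empty + prob (\<Union>k. shell_event h n (Suc k) k)"
      by (rule measure_subadditive) (auto intro!: Psi_empty_events shell_event_events simp: emeasure_finite)
    also have "prob (\<Union>k. shell_event h n (Suc k) k) \<le> (\<Sum>k. prob (shell_event h n (Suc k) k))"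
      by (rule finite_measure_subadditive_countably) (auto simp: shell_event_events prob_shell sums(2))
    finally have upper: "prob (out_degree_ge (Suc n)) \<le> (\<Sum>k. w k * g (Suc k))"
      by (simp add: prob_Psi_empty prob_shell)
    show ?thesis using lower upper sums by linarith
  qed
  then have "\<bar>prob (out_degree_ge (Suc n)) - (1/(1+lam))^Suc n\<bar> \<le> 0"
    by (rule field_le_epsilon) (simp add: mesh)
  then show ?thesis using Suc by simp
qed

end

theorem proposition1:
  fixes M :: "'w measure" and Phi Psi :: "'w \<Rightarrow> (real^2) set" and lambda :: real
  assumes "lambda > 0"
    and "indep_poisson_pps M Phi 1 Psi lambda"
  shows "\<forall>n::nat. measure M {\<omega>\<in>space M. out_degree_origin (Phi \<omega>) (Psi \<omega>) = n}
           = lambda / (1 + lambda) * (1 / (1 + lambda)) ^ n"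
proof
  fix n :: nat
  interpret indep_poisson_pair M Phi Psi lambda using assms by unfold_locales
  have "{\<omega>\<in>space M. out_degree_origin (Phi \<omega>) (Psi \<omega>) = n} = out_degree_ge n - out_degree_ge (Suc n)"
    by (auto simp: out_degree_ge_def)
  also have "prob \<dots> = prob (out_degree_ge n) - prob (out_degree_ge (Suc n))"
    by (rule finite_measure_Diff[OF out_degree_ge_events out_degree_ge_events]) (auto simp: out_degree_ge_def)
  also have "\<dots> = (1 / (1 + lambda)) ^ n - (1 / (1 + lambda)) ^ Suc n"
    by (simp only: prob_out_degree_ge)
  also have "\<dots> = (1 - 1 / (1 + lambda)) * (1 / (1 + lambda)) ^ n"
    by (simp add: algebra_simps)
  also have "1 - 1 / (1 + lambda) = lambda / (1 + lambda)"
    using assms(1) by (simp add: field_simps)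
  finally show "measure M {\<omega>\<in>space M. out_degree_origin (Phi \<omega>) (Psi \<omega>) = n}
      = lambda / (1 + lambda) * (1 / (1 + lambda)) ^ n" .
qed
end
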